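(* Let $n\ge 1$ and let $\Omega=\Omega_e\cup\Omega_o\subset\mathbb{Z}_2^n\setminus\{\mathbf 0\}$, where $\Omega_e$ and $\Omega_o$ are both nonempty, every tuple in $\Omega_e$ has even Hamming weight, and every tuple in $\Omega_o$ has odd Hamming weight. Then $\mathrm{NEPS}(P_3,\ldots,P_3;\Omega)$ (with $n$ factors) does not exhibit perfect state transfer between any pair of distinct vertices. *)

theory Defs
  imports Complex_Main
begin

definition p3_adj :: "nat \<Rightarrow> nat \<Rightarrow> bool" where
  "p3_adj a b \<longleftrightarrow> (a = 0 \<and> b = 1) \<or> (a = 1 \<and> b = 0) \<or> (a = 1 \<and> b = 2) \<or> (a = 2 \<and> b = 1)"

text \<open>Vertex set of the n-fold product P3 x ... x P3: tuples (x_0,...,x_{n-1}),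
  represented as functions nat => nat, with entries in {0,1,2}, fixed to 0 beyond n.\<close>
definition neps_verts :: "nat \<Rightarrow> (nat \<Rightarrow> nat) set" where
  "neps_verts n = {x. \<forall>i. (i < n \<longrightarrow> x i < 3) \<and> (n \<le> i \<longrightarrow> x i = 0)}"

text \<open>A tuple beta in Z_2^n is represented by its support, a subset of {0..<n};
  its Hamming weight is the cardinality of the support.\<close>
definition neps_adj :: "nat \<Rightarrow> nat set set \<Rightarrow> (nat \<Rightarrow> nat) \<Rightarrow> (nat \<Rightarrow> nat) \<Rightarrow> bool" where
  "neps_adj n \<Omega> x y \<longleftrightarrow>
     (\<exists>\<beta>\<in>\<Omega>. \<forall>i<n. (i \<in> \<beta> \<longrightarrow> p3_adj (x i) (y i)) \<and> (i \<notin> \<beta> \<longrightarrow> x i = y i))"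

definition neps_adj_mat :: "nat \<Rightarrow> nat set set \<Rightarrow> (nat \<Rightarrow> nat) \<Rightarrow> (nat \<Rightarrow> nat) \<Rightarrow> complex" where
  "neps_adj_mat n \<Omega> x y = (if neps_adj n \<Omega> x y then 1 else 0)"

fun neps_adj_pow :: "nat \<Rightarrow> nat set set \<Rightarrow> nat \<Rightarrow> (nat \<Rightarrow> nat) \<Rightarrow> (nat \<Rightarrow> nat) \<Rightarrow> complex" where
  "neps_adj_pow n \<Omega> 0 x y = (if x = y then 1 else 0)"
| "neps_adj_pow n \<Omega> (Suc k) x y =
     (\<Sum>w\<in>neps_verts n. neps_adj_pow n \<Omega> k x w * neps_adj_mat n \<Omega> w y)"

definition neps_transition :: "nat \<Rightarrow> nat set set \<Rightarrow> real \<Rightarrow> (nat \<Rightarrow> nat) \<Rightarrow> (nat \<Rightarrow> nat) \<Rightarrow> complex" where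
  "neps_transition n \<Omega> t x y =
     (\<Sum>k. ((- \<i> * complex_of_real t) ^ k / of_nat (fact k)) * neps_adj_pow n \<Omega> k x y)"

definition neps_pst :: "nat \<Rightarrow> nat set set \<Rightarrow> (nat \<Rightarrow> nat) \<Rightarrow> (nat \<Rightarrow> nat) \<Rightarrow> bool" where
  "neps_pst n \<Omega> u v \<longleftrightarrow> (\<exists>t::real. cmod (neps_transition n \<Omega> t u v) = 1)"

end

theory Submission
  imports Defs "HOL-Library.FuncSet"
begin

text \<open>
  The tensor products of the eigenvectors of P3 (eigenvalues \<surd>2, 0, -\<surd>2) diagonalise every
  NEPS of P3: the one indexed by m \<in> {0,1,2}^n has eigenvalue \<lambda>(m), the sum over \<beta> \<in> \<Omega> of the
  product over i \<in> \<beta> of the P3-eigenvalues \<mu>(m i).  Perfect state transfer at time t is the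
  equality case of Cauchy-Schwarz, which forces exp(-2it\<lambda>) to be constant on the eigenvectors
  without zero entries, those indexed by {0,2}^n.  There \<lambda> is a Walsh expansion with
  coefficient \<surd>2^|\<beta>| at each \<beta> \<in> \<Omega>, so Fourier inversion gives (t/\<pi>) 2^n \<surd>2^|\<beta>| \<in> \<int>.
  One \<beta> of even and one of odd weight make \<surd>2 rational unless t = 0, and at t = 0 nothing
  is transferred.
\<close>

lemma prod_of_bool:
  "finite A \<Longrightarrow> (\<Prod>i\<in>A. of_bool (P i)) = (of_bool (\<forall>i\<in>A. P i) :: 'a::comm_semiring_1)"
  by (induction A rule: finite_induct) auto

lemma sum_of_bool_eq_if_unique:
  assumes "finite A" and "\<And>x y. x \<in> A \<Longrightarrow> y \<in> A \<Longrightarrow> P x \<Longrightarrow> P y \<Longrightarrow> x = y"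
  shows "(\<Sum>x\<in>A. of_bool (P x)) = (of_bool (\<exists>x\<in>A. P x) :: 'a::semiring_1)"
proof (cases "\<exists>x\<in>A. P x")
  case True
  then obtain x where "x \<in> A" "P x" by blast
  with assms(2) have "A \<inter> {x. P x} = {x}" by blast
  with assms(1) True show ?thesis by simp
qed (use assms(1) in auto)

lemma cauchy_schwarz_eq_imp_parallel:
  fixes a b :: "'a \<Rightarrow> complex"
  assumes "finite V"
    and a: "(\<Sum>m\<in>V. a m * cnj (a m)) = 1" and b: "(\<Sum>m\<in>V. b m * cnj (b m)) = 1"
    and unit: "cmod (\<Sum>m\<in>V. a m * cnj (b m)) = 1"
    and "m \<in> V"
  shows "a m = (\<Sum>m\<in>V. a m * cnj (b m)) * b m"
proof -
  define S where "S = (\<Sum>m\<in>V. a m * cnj (b m))"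
  have SS: "S * cnj S = 1"
    using complex_norm_square[of S] unit by (simp add: S_def)
  have cS: "(\<Sum>m\<in>V. b m * cnj (a m)) = cnj S"
    by (simp add: S_def cnj_sum mult.commute)
  have expand: "(a m - S * b m) * cnj (a m - S * b m) = a m * cnj (a m) - cnj S * (a m * cnj (b m))
      - S * (b m * cnj (a m)) + S * cnj S * (b m * cnj (b m))" for m
    by (simp add: algebra_simps)
  have "(\<Sum>m\<in>V. (a m - S * b m) * cnj (a m - S * b m))
      = (\<Sum>m\<in>V. a m * cnj (a m)) - cnj S * (\<Sum>m\<in>V. a m * cnj (b m))
        - S * (\<Sum>m\<in>V. b m * cnj (a m)) + S * cnj S * (\<Sum>m\<in>V. b m * cnj (b m))"
    by (simp only: expand sum.distrib sum_subtractf sum_distrib_left)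
  also have "\<dots> = 0"
    using a b cS SS by (simp add: mult.commute flip: S_def)
  finally have "(\<Sum>m\<in>V. of_real ((cmod (a m - S * b m))\<^sup>2)) = (0 :: complex)"
    by (simp only: complex_norm_square)
  then have "(\<Sum>m\<in>V. (cmod (a m - S * b m))\<^sup>2) = 0"
    by (simp only: of_real_sum[symmetric] of_real_eq_0_iff)
  then have "cmod (a m - S * b m) = 0"
    using assms(1,5) by (simp add: sum_nonneg_eq_0_iff)
  then show ?thesis
    by (simp add: S_def)
qed

lemma square_eq_if_real_multiple_eq:
  fixes p q :: real and z w :: complex
  assumes "cmod z = 1" and "cmod w = 1" and "p \<noteq> 0" and eq: "of_real p * z = w * of_real q"
  shows "z ^ 2 = w ^ 2"
proof -
  have "\<bar>p\<bar> = \<bar>q\<bar>"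
    using arg_cong[OF eq, of cmod] assms(1,2) by (simp add: norm_mult)
  then have pq: "of_real p ^ 2 = (of_real q ^ 2 :: complex)"
    by (metis power2_abs of_real_power)
  have "of_real p ^ 2 * z ^ 2 = w ^ 2 * of_real q ^ 2"
    using arg_cong[OF eq, of "\<lambda>x. x ^ 2"] by (simp add: power_mult_distrib)
  moreover have "q \<noteq> 0"
    using \<open>\<bar>p\<bar> = \<bar>q\<bar>\<close> assms(3) by auto
  ultimately show ?thesis
    using pq by simp
qed

lemma cis_square_eq_imp_Ints:
  assumes "cis x ^ 2 = cis y ^ 2"
  shows "(x - y) / pi \<in> \<int>"
proof -
  from assms have "cis (2 * (x - y)) = 1"
    by (simp add: DeMoivre cis_divide[symmetric] right_diff_distrib)
  then have "cos (2 * (x - y)) = 1"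
    by (metis cis.sel(1) one_complex.sel(1))
  then obtain k :: int where "2 * (x - y) = of_int k * 2 * pi"
    using cos_one_2pi_int by blast
  then have "(x - y) / pi = of_int k"
    by (simp add: field_simps)
  then show ?thesis
    by simp
qed

lemma sqrt_2_not_rat: "sqrt 2 \<notin> \<rat>"
proof
  assume "sqrt 2 \<in> \<rat>"
  then obtain m n :: nat where n: "n \<noteq> 0" and q: "\<bar>sqrt 2\<bar> = real m / real n" and "coprime m n"
    by (rule Rats_abs_nat_div_natE)
  have "real m = sqrt 2 * real n"
    using q n by (simp add: field_simps)
  then have "real m ^ 2 = 2 * real n ^ 2"
    by (simp add: power_mult_distrib)
  then have "real (m ^ 2) = real (2 * n ^ 2)"
    by simp
  then have eq: "m ^ 2 = 2 * n ^ 2"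
    by (simp only: of_nat_eq_iff)
  then have "even (m ^ 2)"
    by simp
  then have "even m"
    by simp
  then obtain k where "m = 2 * k" ..
  with eq have "n ^ 2 = 2 * k ^ 2"
    by simp
  then have "even (n ^ 2)"
    by (rule dvdI)
  then have "even n"
    by simp
  with \<open>even m\<close> \<open>coprime m n\<close> show False
    by auto
qed

lemma mult_sqrt_2_powers_Rats_imp_zero:
  fixes c :: real
  assumes "c * sqrt 2 ^ k \<in> \<rat>" and "c * sqrt 2 ^ l \<in> \<rat>" and "even k" and "odd l"
  shows "c = 0"
proof (rule ccontr)
  assume "c \<noteq> 0"
  obtain i j where "k = 2 * i" and "l = 2 * j + 1"
    using assms(3,4) by (meson evenE oddE)
  then have "sqrt 2 = (c * sqrt 2 ^ l) * 2 ^ i / ((c * sqrt 2 ^ k) * 2 ^ j)"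
    using \<open>c \<noteq> 0\<close> by (simp add: power_mult power_add)
  also have "\<dots> \<in> \<rat>"
    by (intro Rats_divide Rats_mult[OF assms(2)] Rats_mult[OF assms(1)]) simp_all
  finally show False
    using sqrt_2_not_rat by simp
qed

definition tuples :: "nat \<Rightarrow> 'a set \<Rightarrow> (nat \<Rightarrow> 'a::zero) set" where
  "tuples n S = {x. \<forall>i. (i < n \<longrightarrow> x i \<in> S) \<and> (n \<le> i \<longrightarrow> x i = 0)}"

lemma neps_verts_eq_tuples: "neps_verts n = tuples n {0,1,2}"
  by (auto simp: neps_verts_def tuples_def)

lemma bij_betw_restrict_tuples:
  "bij_betw (\<lambda>x. restrict x {..<n}) (tuples n S) (PiE {..<n} (\<lambda>_. S))"
  by (rule bij_betw_byWitness[where f' = "\<lambda>g i. if i < n then g i else 0"])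
     (auto simp: tuples_def fun_eq_iff PiE_def extensional_def)

lemma finite_tuples: "finite S \<Longrightarrow> finite (tuples n S)"
  by (simp add: bij_betw_finite[OF bij_betw_restrict_tuples] finite_PiE)

lemma tuples_eq_iff:
  "x \<in> tuples n S \<Longrightarrow> y \<in> tuples n S \<Longrightarrow> x = y \<longleftrightarrow> (\<forall>i<n. x i = y i)"
  by (auto simp: tuples_def fun_eq_iff) (metis not_less)

lemma sum_prod_tuples:
  fixes f :: "nat \<Rightarrow> 'a::zero \<Rightarrow> 'b::comm_semiring_1"
  assumes "finite S"
  shows "(\<Sum>x\<in>tuples n S. \<Prod>i<n. f i (x i)) = (\<Prod>i<n. \<Sum>a\<in>S. f i a)"
proof -
  have "(\<Sum>x\<in>tuples n S. \<Prod>i<n. f i (x i)) = (\<Sum>x\<in>tuples n S. \<Prod>i<n. f i (restrict x {..<n} i))"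
    by simp
  also have "\<dots> = (\<Sum>g\<in>PiE {..<n} (\<lambda>_. S). \<Prod>i<n. f i (g i))"
    by (rule sum.reindex_bij_betw[OF bij_betw_restrict_tuples])
  also have "\<dots> = (\<Prod>i<n. \<Sum>a\<in>S. f i a)"
    using assms by (simp add: prod_sum_PiE)
  finally show ?thesis .
qed

definition p3_eigval :: "nat \<Rightarrow> real" where
  "p3_eigval m = (if m = 0 then sqrt 2 else if m = 1 then 0 else - sqrt 2)"

definition p3_eigvec :: "nat \<Rightarrow> nat \<Rightarrow> real" where
  "p3_eigvec m a =
     (if m = 0 then (if a = 1 then sqrt 2 / 2 else 1 / 2)
      else if m = 1 then (if a = 0 then sqrt 2 / 2 else if a = 1 then 0 else - sqrt 2 / 2)
      else (if a = 1 then - sqrt 2 / 2 else 1 / 2))"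

lemma p3_eigvec_eigen:
  "m \<in> {0,1,2} \<Longrightarrow> b \<in> {0,1,2} \<Longrightarrow>
   (\<Sum>a\<in>{0,1,2}. p3_eigvec m a * of_bool (p3_adj a b)) = p3_eigval m * p3_eigvec m b"
  by (auto simp: p3_eigvec_def p3_eigval_def p3_adj_def)

lemma p3_eigvec_complete:
  "a \<in> {0,1,2} \<Longrightarrow> b \<in> {0,1,2} \<Longrightarrow>
   (\<Sum>m\<in>{0,1,2}. p3_eigvec m a * p3_eigvec m b) = of_bool (a = b)"
  by (auto simp: p3_eigvec_def)

lemma p3_eigvec_nonzero: "m \<in> {0,2} \<Longrightarrow> p3_eigvec m a \<noteq> 0"
  by (auto simp: p3_eigvec_def)

definition neps_eigvec :: "nat \<Rightarrow> (nat \<Rightarrow> nat) \<Rightarrow> (nat \<Rightarrow> nat) \<Rightarrow> real" where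
  "neps_eigvec n m x = (\<Prod>i<n. p3_eigvec (m i) (x i))"

definition neps_eigval :: "nat set set \<Rightarrow> (nat \<Rightarrow> nat) \<Rightarrow> real" where
  "neps_eigval \<Omega> m = (\<Sum>\<beta>\<in>\<Omega>. \<Prod>i\<in>\<beta>. p3_eigval (m i))"

lemma of_bool_neps_adj:
  assumes "\<Omega> \<subseteq> Pow {..<n}"
  shows "of_bool (neps_adj n \<Omega> w y) =
    (\<Sum>\<beta>\<in>\<Omega>. \<Prod>i<n. if i \<in> \<beta> then of_bool (p3_adj (w i) (y i)) else of_bool (w i = y i)
      :: 'a::comm_semiring_1)"
proof -
  let ?P = "\<lambda>\<beta> i. (i \<in> \<beta> \<longrightarrow> p3_adj (w i) (y i)) \<and> (i \<notin> \<beta> \<longrightarrow> w i = y i)"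
  have "finite \<Omega>"
    using assms by (rule finite_subset) simp
  moreover have "\<beta> = {i. i < n \<and> w i \<noteq> y i}" if "\<beta> \<in> \<Omega>" "\<forall>i<n. ?P \<beta> i" for \<beta>
    using that assms by (fastforce simp: p3_adj_def)
  ultimately have "of_bool (neps_adj n \<Omega> w y) = (\<Sum>\<beta>\<in>\<Omega>. of_bool (\<forall>i<n. ?P \<beta> i) :: 'a)"
    unfolding neps_adj_def by (intro sum_of_bool_eq_if_unique[symmetric]) auto
  also have "\<dots> = (\<Sum>\<beta>\<in>\<Omega>. \<Prod>i<n. of_bool (?P \<beta> i))"
    by (simp add: prod_of_bool lessThan_def)
  also have "\<dots> = (\<Sum>\<beta>\<in>\<Omega>. \<Prod>i<n.
      if i \<in> \<beta> then of_bool (p3_adj (w i) (y i)) else of_bool (w i = y i))"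
    by (intro sum.cong prod.cong refl) auto
  finally show ?thesis .
qed

lemma neps_eigvec_eigen:
  assumes \<Omega>: "\<Omega> \<subseteq> Pow {..<n}" and m: "m \<in> neps_verts n" and y: "y \<in> neps_verts n"
  shows "(\<Sum>w\<in>neps_verts n. neps_eigvec n m w * of_bool (neps_adj n \<Omega> w y))
    = neps_eigval \<Omega> m * neps_eigvec n m y"
proof -
  define B where "B \<beta> i a b = (if i \<in> \<beta> then of_bool (p3_adj a b) else of_bool (a = b) :: real)"
    for \<beta> :: "nat set" and i a b :: nat
  have "(\<Sum>w\<in>neps_verts n. neps_eigvec n m w * of_bool (neps_adj n \<Omega> w y))
      = (\<Sum>w\<in>tuples n {0,1,2}. \<Sum>\<beta>\<in>\<Omega>. \<Prod>i<n. p3_eigvec (m i) (w i) * B \<beta> i (w i) (y i))"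
    by (simp add: of_bool_neps_adj[OF \<Omega>] neps_verts_eq_tuples neps_eigvec_def B_def
        sum_distrib_left prod.distrib)
  also have "\<dots> = (\<Sum>\<beta>\<in>\<Omega>. \<Prod>i<n. \<Sum>a\<in>{0,1,2}. p3_eigvec (m i) a * B \<beta> i a (y i))"
    by (subst sum.swap, intro sum.cong refl)
       (rule sum_prod_tuples[where f = "\<lambda>i a. p3_eigvec (m i) a * B _ i a (y i)"], simp)
  also have "\<dots> = (\<Sum>\<beta>\<in>\<Omega>. \<Prod>i<n. (if i \<in> \<beta> then p3_eigval (m i) else 1) * p3_eigvec (m i) (y i))"
  proof (intro sum.cong prod.cong refl)
    fix \<beta> i assume "i \<in> {..<n}"
    then have m_i: "m i \<in> {0,1,2}" and y_i: "y i \<in> {0,1,2}"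
      using m y by (auto simp: neps_verts_def)
    show "(\<Sum>a\<in>{0,1,2}. p3_eigvec (m i) a * B \<beta> i a (y i))
        = (if i \<in> \<beta> then p3_eigval (m i) else 1) * p3_eigvec (m i) (y i)"
    proof (cases "i \<in> \<beta>")
      case True
      then show ?thesis
        using p3_eigvec_eigen[OF m_i y_i] by (simp add: B_def del: sum_mult_of_bool_eq)
    qed (use y_i in \<open>auto simp: B_def\<close>)
  qed
  also have "\<dots> = (\<Sum>\<beta>\<in>\<Omega>. (\<Prod>i\<in>\<beta>. p3_eigval (m i)) * neps_eigvec n m y)"
  proof (intro sum.cong refl)
    fix \<beta> assume "\<beta> \<in> \<Omega>"
    then have "{..<n} \<inter> \<beta> = \<beta>" using \<Omega> by blast
    then have "(\<Prod>i<n. if i \<in> \<beta> then p3_eigval (m i) else 1) = (\<Prod>i\<in>\<beta>. p3_eigval (m i))"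
      by (metis finite_lessThan prod.inter_restrict)
    then show "(\<Prod>i<n. (if i \<in> \<beta> then p3_eigval (m i) else 1) * p3_eigvec (m i) (y i))
        = (\<Prod>i\<in>\<beta>. p3_eigval (m i)) * neps_eigvec n m y"
      by (simp add: prod.distrib neps_eigvec_def)
  qed
  also have "\<dots> = neps_eigval \<Omega> m * neps_eigvec n m y"
    by (simp add: neps_eigval_def sum_distrib_right)
  finally show ?thesis .
qed

lemma neps_eigvec_complete:
  assumes x: "x \<in> neps_verts n" and y: "y \<in> neps_verts n"
  shows "(\<Sum>m\<in>neps_verts n. neps_eigvec n m x * neps_eigvec n m y) = of_bool (x = y)"
proof -
  have "(\<Sum>m\<in>neps_verts n. neps_eigvec n m x * neps_eigvec n m y)
      = (\<Prod>i<n. \<Sum>c\<in>{0,1,2}. p3_eigvec c (x i) * p3_eigvec c (y i))"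
    unfolding neps_verts_eq_tuples neps_eigvec_def prod.distrib[symmetric]
    by (rule sum_prod_tuples) simp
  also have "\<dots> = (\<Prod>i<n. of_bool (x i = y i))"
    using x y by (intro prod.cong refl p3_eigvec_complete) (auto simp: neps_verts_def)
  also have "\<dots> = of_bool (x = y)"
    using x y by (simp add: prod_of_bool Ball_def tuples_eq_iff[of x n "{0,1,2}" y] neps_verts_eq_tuples)
  finally show ?thesis .
qed

lemma neps_adj_pow_eq:
  assumes \<Omega>: "\<Omega> \<subseteq> Pow {..<n}" and x: "x \<in> neps_verts n" and y: "y \<in> neps_verts n"
  shows "neps_adj_pow n \<Omega> k x y
    = of_real (\<Sum>m\<in>neps_verts n. neps_eigval \<Omega> m ^ k * neps_eigvec n m x * neps_eigvec n m y)"
  using y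
proof (induction k arbitrary: y)
  case 0
  then show ?case using neps_eigvec_complete[OF x] by (simp add: mult.assoc)
next
  case (Suc k)
  let ?V = "neps_verts n" and ?vec = "neps_eigvec n" and ?val = "neps_eigval \<Omega>"
  have "neps_adj_pow n \<Omega> (Suc k) x y
      = (\<Sum>w\<in>?V. of_real ((\<Sum>m\<in>?V. ?val m ^ k * ?vec m x * ?vec m w) * of_bool (neps_adj n \<Omega> w y)))"
    unfolding neps_adj_pow.simps neps_adj_mat_def using Suc.IH by (intro sum.cong refl) simp
  also have "\<dots> = of_real (\<Sum>w\<in>?V. (\<Sum>m\<in>?V. ?val m ^ k * ?vec m x * ?vec m w) * of_bool (neps_adj n \<Omega> w y))"
    by (simp only: of_real_sum)
  also have "(\<Sum>w\<in>?V. (\<Sum>m\<in>?V. ?val m ^ k * ?vec m x * ?vec m w) * of_bool (neps_adj n \<Omega> w y))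
      = (\<Sum>m\<in>?V. ?val m ^ k * ?vec m x * (\<Sum>w\<in>?V. ?vec m w * of_bool (neps_adj n \<Omega> w y)))"
    by (simp only: sum_distrib_right sum_distrib_left mult.assoc) (rule sum.swap)
  also have "\<dots> = (\<Sum>m\<in>?V. ?val m ^ Suc k * ?vec m x * ?vec m y)"
    using Suc.prems by (intro sum.cong refl) (simp add: neps_eigvec_eigen[OF \<Omega>])
  finally show ?case .
qed

lemma neps_transition_eq:
  assumes \<Omega>: "\<Omega> \<subseteq> Pow {..<n}" and u: "u \<in> neps_verts n" and v: "v \<in> neps_verts n"
  shows "neps_transition n \<Omega> t u v
    = (\<Sum>m\<in>neps_verts n. of_real (neps_eigvec n m u * neps_eigvec n m v) * cis (- t * neps_eigval \<Omega> m))"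
proof -
  let ?V = "neps_verts n" and ?c = "\<lambda>m. neps_eigvec n m u * neps_eigvec n m v"
    and ?x = "\<lambda>m. \<i> * complex_of_real (- t * neps_eigval \<Omega> m)"
  have "(\<lambda>k. \<Sum>m\<in>?V. of_real (?c m) * (?x m ^ k /\<^sub>R fact k)) sums (\<Sum>m\<in>?V. of_real (?c m) * exp (?x m))"
    by (intro sums_sum sums_mult exp_converges)
  moreover have "of_real (?c m) * (?x m ^ k /\<^sub>R fact k)
      = (- \<i> * of_real t) ^ k / of_nat (fact k) * of_real (neps_eigval \<Omega> m ^ k * ?c m)" for m k
  proof -
    have x_eq: "?x m = (- \<i> * of_real t) * of_real (neps_eigval \<Omega> m)"
      by simp
    show ?thesis
      unfolding x_eq power_mult_distrib scaleR_conv_of_real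
      by (simp add: divide_inverse mult_ac of_real_inverse[symmetric])
  qed
  ultimately have "(\<lambda>k. (- \<i> * of_real t) ^ k / of_nat (fact k) * neps_adj_pow n \<Omega> k u v)
      sums (\<Sum>m\<in>?V. of_real (?c m) * exp (?x m))"
    by (simp add: neps_adj_pow_eq[OF \<Omega> u v] of_real_sum sum_distrib_left mult_ac)
  then show ?thesis
    unfolding neps_transition_def cis_conv_exp by (rule sums_unique[symmetric])
qed

lemma neps_transition_0:
  assumes "\<Omega> \<subseteq> Pow {..<n}" and "u \<in> neps_verts n" and "v \<in> neps_verts n"
  shows "neps_transition n \<Omega> 0 u v = of_bool (u = v)"
proof -
  have "neps_transition n \<Omega> 0 u v = of_real (\<Sum>m\<in>neps_verts n. neps_eigvec n m u * neps_eigvec n m v)"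
    by (simp only: neps_transition_eq[OF assms] minus_zero mult_zero_left cis_zero mult_1_right
        of_real_sum)
  then show ?thesis
    using neps_eigvec_complete[OF assms(2,3)] by simp
qed

lemma neps_eigvec_nonzero: "e \<in> tuples n {0,2} \<Longrightarrow> neps_eigvec n e x \<noteq> 0"
  using p3_eigvec_nonzero by (auto simp: neps_eigvec_def tuples_def)

lemma neps_unit_transition_imp_eigval_diff_Ints:
  assumes \<Omega>: "\<Omega> \<subseteq> Pow {..<n}" and u: "u \<in> neps_verts n" and v: "v \<in> neps_verts n"
    and unit: "cmod (neps_transition n \<Omega> t u v) = 1"
    and e: "e \<in> tuples n {0,2}" and e': "e' \<in> tuples n {0,2}"
  shows "t / pi * (neps_eigval \<Omega> e - neps_eigval \<Omega> e') \<in> \<int>"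
proof -
  let ?V = "neps_verts n" and ?vec = "neps_eigvec n"
  define z where "z m = cis (- t * neps_eigval \<Omega> m)" for m
  define S where "S = neps_transition n \<Omega> t u v"
  have unit_u: "(\<Sum>m\<in>?V. of_real (?vec m u) * z m * cnj (of_real (?vec m u) * z m)) = 1"
  proof -
    have "of_real (?vec m u) * z m * cnj (of_real (?vec m u) * z m) = of_real (?vec m u * ?vec m u)"
      for m
      by (simp add: z_def cis_cnj mult_ac cis_mult)
    then have "(\<Sum>m\<in>?V. of_real (?vec m u) * z m * cnj (of_real (?vec m u) * z m))
        = of_real (\<Sum>m\<in>?V. ?vec m u * ?vec m u)"
      by (simp only: of_real_sum)
    then show ?thesis
      using neps_eigvec_complete[OF u u] by simp
  qed
  have unit_v: "(\<Sum>m\<in>?V. of_real (?vec m v) * cnj (of_real (?vec m v))) = 1"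
    using neps_eigvec_complete[OF v v] by (simp flip: of_real_sum of_real_mult)
  have "S = (\<Sum>m\<in>?V. of_real (?vec m u) * z m * cnj (of_real (?vec m v)))"
    by (simp add: S_def z_def neps_transition_eq[OF \<Omega> u v] mult_ac)
  then have parallel: "of_real (?vec m u) * z m = S * of_real (?vec m v)" if "m \<in> ?V" for m
    using cauchy_schwarz_eq_imp_parallel[OF _ unit_u unit_v _ that] unit
    by (simp add: neps_verts_eq_tuples finite_tuples S_def)
  \<comment> \<open>these eigenvectors have no zero entry, so their phases agree with S up to sign\<close>
  have "z m ^ 2 = S ^ 2" if "m \<in> tuples n {0,2}" for m
  proof (rule square_eq_if_real_multiple_eq)
    show "cmod (z m) = 1" "cmod S = 1"
      using unit by (simp_all add: z_def S_def)
    show "?vec m u \<noteq> 0"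
      using that by (rule neps_eigvec_nonzero)
    show "of_real (?vec m u) * z m = S * of_real (?vec m v)"
      using that by (intro parallel) (auto simp: tuples_def neps_verts_def)
  qed
  then have "(- t * neps_eigval \<Omega> e - - t * neps_eigval \<Omega> e') / pi \<in> \<int>"
    using e e' by (intro cis_square_eq_imp_Ints) (simp add: z_def)
  moreover have "(- t * neps_eigval \<Omega> e - - t * neps_eigval \<Omega> e') / pi
      = - (t / pi * (neps_eigval \<Omega> e - neps_eigval \<Omega> e'))"
    by (simp add: field_simps)
  ultimately show ?thesis
    by (metis Ints_minus minus_minus)
qed

text \<open>A tuple e with entries in {0,2} stands for the vector of (\<int>/2)^n supported on {i. e i = 2};
  walsh \<gamma> is then the character of (\<int>/2)^n indexed by \<gamma>.\<close>

definition walsh :: "nat set \<Rightarrow> (nat \<Rightarrow> nat) \<Rightarrow> real" where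
  "walsh \<gamma> e = (\<Prod>i\<in>\<gamma>. if e i = 0 then 1 else -1)"

lemma walsh_eq_prod_lessThan:
  assumes "\<gamma> \<subseteq> {..<n}"
  shows "walsh \<gamma> e = (\<Prod>i<n. if i \<in> \<gamma> then (if e i = 0 then 1 else -1) else 1)"
proof -
  have "{..<n} \<inter> \<gamma> = \<gamma>"
    using assms by blast
  then show ?thesis
    unfolding walsh_def using prod.inter_restrict[of "{..<n}" _ \<gamma>] by simp
qed

lemma walsh_Ints: "finite \<gamma> \<Longrightarrow> walsh \<gamma> e \<in> \<int>"
  unfolding walsh_def by (intro Ints_prod) simp

lemma sum_walsh_mult:
  assumes "\<gamma> \<subseteq> {..<n}" and "\<beta> \<subseteq> {..<n}"
  shows "(\<Sum>e\<in>tuples n {0,2}. walsh \<gamma> e * walsh \<beta> e) = 2 ^ n * of_bool (\<gamma> = \<beta>)"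
proof -
  define s where "s \<delta> i a = (if i \<in> \<delta> then (if a = 0 then 1 else -1) else 1 :: real)"
    for \<delta> :: "nat set" and i a :: nat
  have "(\<Sum>e\<in>tuples n {0,2}. walsh \<gamma> e * walsh \<beta> e) = (\<Prod>i<n. \<Sum>a\<in>{0,2}. s \<gamma> i a * s \<beta> i a)"
    unfolding walsh_eq_prod_lessThan[OF assms(1)] walsh_eq_prod_lessThan[OF assms(2)]
      prod.distrib[symmetric] s_def[symmetric]
    by (rule sum_prod_tuples[where f = "\<lambda>i a. s \<gamma> i a * s \<beta> i a"]) simp
  also have "\<dots> = (\<Prod>i<n. 2 * of_bool (i \<in> \<gamma> \<longleftrightarrow> i \<in> \<beta>))"
    by (intro prod.cong refl) (auto simp: s_def)
  also have "\<dots> = 2 ^ n * of_bool (\<forall>i<n. i \<in> \<gamma> \<longleftrightarrow> i \<in> \<beta>)"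
    by (simp add: prod.distrib prod_of_bool Ball_def)
  also have "(\<forall>i<n. i \<in> \<gamma> \<longleftrightarrow> i \<in> \<beta>) \<longleftrightarrow> \<gamma> = \<beta>"
    using assms by blast
  finally show ?thesis .
qed

lemma sum_walsh:
  "\<gamma> \<subseteq> {..<n} \<Longrightarrow> \<gamma> \<noteq> {} \<Longrightarrow> (\<Sum>e\<in>tuples n {0,2}. walsh \<gamma> e) = 0"
  using sum_walsh_mult[of \<gamma> n "{}"] by (simp add: walsh_def)

lemma neps_eigval_eq_walsh:
  assumes \<Omega>: "\<Omega> \<subseteq> Pow {..<n}" and e: "e \<in> tuples n {0,2}"
  shows "neps_eigval \<Omega> e = (\<Sum>\<beta>\<in>\<Omega>. sqrt 2 ^ card \<beta> * walsh \<beta> e)"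
  unfolding neps_eigval_def
proof (intro sum.cong refl)
  fix \<beta> assume "\<beta> \<in> \<Omega>"
  have "p3_eigval (e i) = sqrt 2 * (if e i = 0 then 1 else -1)" if "i \<in> \<beta>" for i
  proof -
    have "e i \<in> {0,2}"
      using \<Omega> e that \<open>\<beta> \<in> \<Omega>\<close> by (auto simp: tuples_def)
    then show ?thesis
      by (auto simp: p3_eigval_def)
  qed
  then have "(\<Prod>i\<in>\<beta>. p3_eigval (e i)) = (\<Prod>i\<in>\<beta>. sqrt 2 * (if e i = 0 then 1 else -1))"
    by (rule prod.cong[OF refl])
  then show "(\<Prod>i\<in>\<beta>. p3_eigval (e i)) = sqrt 2 ^ card \<beta> * walsh \<beta> e"
    by (simp add: prod.distrib walsh_def)
qed

lemma sum_walsh_mult_neps_eigval: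
  assumes \<Omega>: "\<Omega> \<subseteq> Pow {..<n}" and \<gamma>: "\<gamma> \<in> \<Omega>"
  shows "(\<Sum>e\<in>tuples n {0,2}. walsh \<gamma> e * neps_eigval \<Omega> e) = 2 ^ n * sqrt 2 ^ card \<gamma>"
proof -
  have "finite \<Omega>"
    using \<Omega> by (rule finite_subset) simp
  have "(\<Sum>e\<in>tuples n {0,2}. walsh \<gamma> e * neps_eigval \<Omega> e)
      = (\<Sum>\<beta>\<in>\<Omega>. sqrt 2 ^ card \<beta> * (\<Sum>e\<in>tuples n {0,2}. walsh \<gamma> e * walsh \<beta> e))"
    unfolding sum_distrib_left
    by (subst sum.swap) (intro sum.cong refl, simp add: neps_eigval_eq_walsh[OF \<Omega>]
        sum_distrib_left mult_ac)
  also have "\<dots> = (\<Sum>\<beta>\<in>\<Omega>. if \<beta> = \<gamma> then 2 ^ n * sqrt 2 ^ card \<beta> else 0)"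
    using \<Omega> \<gamma> by (intro sum.cong refl) (auto simp: sum_walsh_mult subset_iff)
  also have "\<dots> = 2 ^ n * sqrt 2 ^ card \<gamma>"
    using \<open>finite \<Omega>\<close> \<gamma> by simp
  finally show ?thesis .
qed

lemma neps_eigval_diff_Ints_imp_coeff_Ints:
  assumes \<Omega>: "\<Omega> \<subseteq> Pow {..<n}" and \<gamma>: "\<gamma> \<in> \<Omega>" "\<gamma> \<noteq> {}"
    and Ints: "\<And>e. e \<in> tuples n {0,2} \<Longrightarrow> c * (neps_eigval \<Omega> e - neps_eigval \<Omega> e0) \<in> \<int>"
  shows "c * 2 ^ n * sqrt 2 ^ card \<gamma> \<in> \<int>"
proof -
  have "finite \<gamma>"
    using \<Omega> \<gamma> finite_subset by blast
  then have "(\<Sum>e\<in>tuples n {0,2}. walsh \<gamma> e * (c * (neps_eigval \<Omega> e - neps_eigval \<Omega> e0))) \<in> \<int>"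
    by (intro Ints_sum Ints_mult walsh_Ints Ints)
  also have "(\<Sum>e\<in>tuples n {0,2}. walsh \<gamma> e * (c * (neps_eigval \<Omega> e - neps_eigval \<Omega> e0)))
      = c * (\<Sum>e\<in>tuples n {0,2}. walsh \<gamma> e * neps_eigval \<Omega> e)
        - c * neps_eigval \<Omega> e0 * (\<Sum>e\<in>tuples n {0,2}. walsh \<gamma> e)"
    by (simp add: algebra_simps sum_subtractf sum_distrib_left)
  also have "\<dots> = c * 2 ^ n * sqrt 2 ^ card \<gamma>"
    using \<Omega> \<gamma> by (simp add: sum_walsh_mult_neps_eigval sum_walsh subset_iff)
  finally show ?thesis .
qed

lemma neps_unit_transition_imp_time_0:
  assumes \<Omega>: "\<Omega> \<subseteq> Pow {..<n}" and nonempty: "{} \<notin> \<Omega>"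
    and even: "\<gamma>e \<in> \<Omega>" "even (card \<gamma>e)" and odd: "\<gamma>o \<in> \<Omega>" "odd (card \<gamma>o)"
    and u: "u \<in> neps_verts n" and v: "v \<in> neps_verts n"
    and unit: "cmod (neps_transition n \<Omega> t u v) = 1"
  shows "t = 0"
proof -
  have "(\<lambda>_. 0) \<in> tuples n {0,2}"
    by (simp add: tuples_def)
  then have Ints: "t / pi * 2 ^ n * sqrt 2 ^ card \<gamma> \<in> \<int>" if "\<gamma> \<in> \<Omega>" for \<gamma>
    using that nonempty
    by (intro neps_eigval_diff_Ints_imp_coeff_Ints[OF \<Omega>] neps_unit_transition_imp_eigval_diff_Ints[OF \<Omega> u v unit])
       auto
  have "t / pi * 2 ^ n = 0"
    using Ints[OF even(1)] Ints[OF odd(1)] even(2) odd(2) Ints_subset_Rats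
    by (intro mult_sqrt_2_powers_Rats_imp_zero[of _ "card \<gamma>e" "card \<gamma>o"]) auto
  then show "t = 0"
    by simp
qed

theorem theorem2p3:
  fixes n :: nat and \<Omega> \<Omega>e \<Omega>o :: "nat set set"
  assumes "n \<ge> 1"
    and "\<Omega> = \<Omega>e \<union> \<Omega>o"
    and "\<forall>\<beta>\<in>\<Omega>. \<beta> \<subseteq> {0..<n} \<and> \<beta> \<noteq> {}"
    and "\<Omega>e \<noteq> {}" and "\<Omega>o \<noteq> {}"
    and "\<forall>\<beta>\<in>\<Omega>e. even (card \<beta>)"
    and "\<forall>\<beta>\<in>\<Omega>o. odd (card \<beta>)"
  shows "\<not> (\<exists>u\<in>neps_verts n. \<exists>v\<in>neps_verts n. u \<noteq> v \<and> neps_pst n \<Omega> u v)"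
proof
  assume "\<exists>u\<in>neps_verts n. \<exists>v\<in>neps_verts n. u \<noteq> v \<and> neps_pst n \<Omega> u v"
  then obtain u v t where u: "u \<in> neps_verts n" and v: "v \<in> neps_verts n" and "u \<noteq> v"
    and unit: "cmod (neps_transition n \<Omega> t u v) = 1"
    by (auto simp: neps_pst_def)
  have \<Omega>: "\<Omega> \<subseteq> Pow {..<n}" and "{} \<notin> \<Omega>"
    using assms(3) by (auto simp: atLeast0LessThan)
  obtain \<gamma>e \<gamma>o where \<gamma>: "\<gamma>e \<in> \<Omega>" "even (card \<gamma>e)" "\<gamma>o \<in> \<Omega>" "odd (card \<gamma>o)"
    using assms(2,4-7) by blast
  have "t = 0"
    using \<Omega> \<open>{} \<notin> \<Omega>\<close> \<gamma> u v unit by (rule neps_unit_transition_imp_time_0)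
  then show False
    using unit neps_transition_0[OF \<Omega> u v] \<open>u \<noteq> v\<close> by simp
qed

end
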